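(* Let $E_1,E_2$ be nonempty bounded subsets of $M_a$ and $f:E_1\to E_2$ a surjective $d_a$-isometry; let $p\in E_1$ and $q=f(p)$. Then: (a) whenever $x_1,x_2,\dots\in E_1$ and $\alpha_1,\alpha_2,\dots\in\mathbb R$ are such that $\sum_i\alpha_i(x_i-p)$ converges in $M_a$, the series $\sum_i\alpha_i(f(x_i)-q)$ also converges in $M_a$; and (b) if moreover $y_1,y_2,\dots\in E_1$, $\beta_1,\beta_2,\dots\in\mathbb R$ with $\sum_i\alpha_i(x_i-p)=\sum_i\beta_i(y_i-p)\in M_a$, then $\sum_i\alpha_i(f(x_i)-q)=\sum_i\beta_i(f(y_i)-q)$. Consequently the map $F:\mathrm{GS}(E_1,p)\to M_a$, $F\big(p+\sum_i\alpha_i(x_i-p)\big)=q+\sum_i\alpha_i(f(x_i)-q)$, is well defined.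
   Context: Let $a=\{a_i\}$ be a sequence of positive reals with $\sum_i a_i^2<\infty$, $M_a=\{x\in\mathbb{R}^{\mathbb N}:\sum_i a_i^2x_i^2<\infty\}$ with inner product $\langle x,y\rangle_a=\sum_i a_i^2x_iy_i$, norm $\|\cdot\|_a$ and metric $d_a(x,y)=\|x-y\|_a$; a $d_a$-isometry is a map preserving $d_a$. Sums are indexed by finite or countable subsets of $\mathbb N$, and infinite sums are $\|\cdot\|_a$-limits of partial sums. For $p\in E\subset M_a$, $\mathrm{GS}(E,p)=\{p+\sum_i\alpha_i(x_i-p)\in M_a: x_i\in E,\ \alpha_i\in\mathbb R\}$. *)

theory Defs
  imports "HOL-Analysis.Analysis"
begin

definition Ma :: "(nat \<Rightarrow> real) \<Rightarrow> (nat \<Rightarrow> real) set" where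
  "Ma a = {x. summable (\<lambda>i. (a i)^2 * (x i)^2)}"

definition norm_a :: "(nat \<Rightarrow> real) \<Rightarrow> (nat \<Rightarrow> real) \<Rightarrow> real" where
  "norm_a a x = sqrt (\<Sum>i. (a i)^2 * (x i)^2)"

definition dist_a :: "(nat \<Rightarrow> real) \<Rightarrow> (nat \<Rightarrow> real) \<Rightarrow> (nat \<Rightarrow> real) \<Rightarrow> real" where
  "dist_a a x y = norm_a a (\<lambda>j. x j - y j)"

definition ga_sums :: "(nat \<Rightarrow> real) \<Rightarrow> (nat \<Rightarrow> nat \<Rightarrow> real) \<Rightarrow> (nat \<Rightarrow> real) \<Rightarrow> bool" where
  "ga_sums a u s \<longleftrightarrow> s \<in> Ma a \<and>
     (\<lambda>n. norm_a a (\<lambda>j. (\<Sum>i<n. u i j) - s j)) \<longlonglongrightarrow> 0"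

definition ga_summable :: "(nat \<Rightarrow> real) \<Rightarrow> (nat \<Rightarrow> nat \<Rightarrow> real) \<Rightarrow> bool" where
  "ga_summable a u \<longleftrightarrow> (\<exists>s. ga_sums a u s)"

definition bounded_a :: "(nat \<Rightarrow> real) \<Rightarrow> (nat \<Rightarrow> real) set \<Rightarrow> bool" where
  "bounded_a a E \<longleftrightarrow> (\<exists>C. \<forall>x\<in>E. \<forall>y\<in>E. dist_a a x y \<le> C)"

definition GS :: "(nat \<Rightarrow> real) \<Rightarrow> (nat \<Rightarrow> real) set \<Rightarrow> (nat \<Rightarrow> real) \<Rightarrow> (nat \<Rightarrow> real) set" where
  "GS a E p = {z. \<exists>x \<alpha> s. (\<forall>i. x i \<in> E) \<and>
      ga_sums a (\<lambda>i j. \<alpha> i * (x i j - p j)) s \<and> z = (\<lambda>j. p j + s j)}"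

end

theory Submission
  imports Defs
begin

text \<open>Multiplying coordinates by the weights \<open>a\<^sub>i\<close> identifies \<open>M\<^sub>a\<close> isometrically with
  \<open>\<ell>\<^sup>2\<close>, a Hilbert space. By polarization an isometry \<open>f\<close> with \<open>f p = q\<close> preserves the
  inner products \<open>\<langle>x - p, y - p\<rangle>\<close>, so every difference of finite combinations
  \<open>\<Sum> \<alpha>\<^sub>i (f x\<^sub>i - q) - \<Sum> \<beta>\<^sub>k (f y\<^sub>k - q)\<close> has the same norm as
  \<open>\<Sum> \<alpha>\<^sub>i (x\<^sub>i - p) - \<Sum> \<beta>\<^sub>k (y\<^sub>k - p)\<close>. Hence the partial sums of an image series are
  Cauchy whenever those of the original series are, and converge by completeness; and when
  two series have the same sum, the difference of their image series tends to \<open>0\<close>.\<close>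

section \<open>Square-summable sequences\<close>

lemma summable_mult_of_square_summable:
  fixes x y :: "nat \<Rightarrow> real"
  assumes "summable (\<lambda>i. (x i)^2)" "summable (\<lambda>i. (y i)^2)"
  shows "summable (\<lambda>i. x i * y i)"
proof (rule summable_comparison_test')
  show "summable (\<lambda>i. (x i)^2 + (y i)^2)"
    using assms by (rule summable_add)
  show "norm (x i * y i) \<le> (x i)^2 + (y i)^2" for i
  proof -
    have "norm (x i * y i) \<le> 2 * \<bar>x i\<bar> * \<bar>y i\<bar>"
      by (simp add: abs_mult)
    also have "\<dots> \<le> (x i)^2 + (y i)^2"
      using sum_squares_bound[of "\<bar>x i\<bar>" "\<bar>y i\<bar>"] by simp
    finally show ?thesis .
  qed
qed

lemma square_summable_add:
  fixes x y :: "nat \<Rightarrow> real"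
  assumes "summable (\<lambda>i. (x i)^2)" "summable (\<lambda>i. (y i)^2)"
  shows "summable (\<lambda>i. (x i + y i)^2)"
proof -
  have "summable (\<lambda>i. (x i)^2 + (y i)^2 + 2 * (x i * y i))"
    using assms summable_mult_of_square_summable[OF assms]
    by (intro summable_add summable_mult)
  then show ?thesis by (simp add: power2_sum mult.assoc)
qed

lemma square_summable_scale:
  fixes x :: "nat \<Rightarrow> real"
  assumes "summable (\<lambda>i. (x i)^2)"
  shows "summable (\<lambda>i. (c * x i)^2)"
  using summable_mult[OF assms, of "c^2"] by (simp add: power_mult_distrib)

typedef l2 = "{x::nat \<Rightarrow> real. summable (\<lambda>i. (x i)^2)}"
  by (rule exI[of _ "\<lambda>i. 0"]) simp

lemma square_summable_Rep_l2 [simp]: "summable (\<lambda>i. (Rep_l2 x i)^2)"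
  using Rep_l2 by simp

lemma l2_eqI: "(\<And>i. Rep_l2 x i = Rep_l2 y i) \<Longrightarrow> x = y"
  by (simp add: Rep_l2_inject[symmetric] fun_eq_iff)

instantiation l2 :: real_inner
begin

definition "0 = Abs_l2 (\<lambda>i. 0)"
definition "x + y = Abs_l2 (\<lambda>i. Rep_l2 x i + Rep_l2 y i)"
definition "- x = Abs_l2 (\<lambda>i. - Rep_l2 x i)"
definition "x - y = Abs_l2 (\<lambda>i. Rep_l2 x i - Rep_l2 y i)"
definition "scaleR c x = Abs_l2 (\<lambda>i. c * Rep_l2 x i)"
definition "inner x y = (\<Sum>i. Rep_l2 x i * Rep_l2 y i)"
definition "norm (x::l2) = sqrt (inner x x)"
definition "sgn (x::l2) = scaleR (inverse (norm x)) x"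
definition "dist (x::l2) y = norm (x - y)"
definition "uniformity = (INF e\<in>{0<..}. principal {(x::l2, y). dist x y < e})"
definition "open (U::l2 set) = (\<forall>x\<in>U. \<forall>\<^sub>F (x', y) in uniformity. x' = x \<longrightarrow> y \<in> U)"

lemma Rep_l2_zero [simp]: "Rep_l2 0 = (\<lambda>i. 0)"
  by (simp add: zero_l2_def Abs_l2_inverse)

lemma Rep_l2_add [simp]: "Rep_l2 (x + y) = (\<lambda>i. Rep_l2 x i + Rep_l2 y i)"
  by (simp add: plus_l2_def Abs_l2_inverse square_summable_add)

lemma Rep_l2_uminus [simp]: "Rep_l2 (- x) = (\<lambda>i. - Rep_l2 x i)"
  by (simp add: uminus_l2_def Abs_l2_inverse)

lemma Rep_l2_diff [simp]: "Rep_l2 (x - y) = (\<lambda>i. Rep_l2 x i - Rep_l2 y i)"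
  using square_summable_add[of "Rep_l2 x" "\<lambda>i. - Rep_l2 y i"]
  by (simp add: minus_l2_def Abs_l2_inverse)

lemma Rep_l2_scaleR [simp]: "Rep_l2 (scaleR c x) = (\<lambda>i. c * Rep_l2 x i)"
  by (simp add: scaleR_l2_def Abs_l2_inverse square_summable_scale)

instance
proof
  fix x y z :: l2 and a b :: real
  show "x + y + z = x + (y + z)" by (rule l2_eqI) (simp add: algebra_simps)
  show "x + y = y + x" by (rule l2_eqI) (simp add: algebra_simps)
  show "0 + x = x" by (rule l2_eqI) simp
  show "- x + x = 0" by (rule l2_eqI) simp
  show "x - y = x + - y" by (rule l2_eqI) simp
  show "a *\<^sub>R (x + y) = a *\<^sub>R x + a *\<^sub>R y" by (rule l2_eqI) (simp add: algebra_simps)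
  show "(a + b) *\<^sub>R x = a *\<^sub>R x + b *\<^sub>R x" by (rule l2_eqI) (simp add: algebra_simps)
  show "a *\<^sub>R b *\<^sub>R x = (a * b) *\<^sub>R x" by (rule l2_eqI) (simp add: mult.assoc)
  show "1 *\<^sub>R x = x" by (rule l2_eqI) simp
  show "sgn x = inverse (norm x) *\<^sub>R x" by (simp add: sgn_l2_def)
  show "dist x y = norm (x - y)" by (simp add: dist_l2_def)
  show "uniformity = (INF e\<in>{0<..}. principal {(x::l2, y). dist x y < e})"
    by (simp add: uniformity_l2_def)
  show "open U = (\<forall>x\<in>U. \<forall>\<^sub>F (x', y) in uniformity. x' = x \<longrightarrow> y \<in> U)" for U :: "l2 set"
    by (simp add: open_l2_def)
  show "inner x y = inner y x" by (simp add: inner_l2_def mult.commute)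
  show "inner (x + y) z = inner x z + inner y z"
    by (simp add: inner_l2_def distrib_right suminf_add summable_mult_of_square_summable)
  show "inner (a *\<^sub>R x) y = a * inner x y"
    by (simp add: inner_l2_def mult.assoc suminf_mult summable_mult_of_square_summable)
  have square_summable: "summable (\<lambda>i. Rep_l2 x i * Rep_l2 x i)"
    by (simp add: summable_mult_of_square_summable)
  then show "0 \<le> inner x x"
    by (simp add: inner_l2_def suminf_nonneg)
  show "inner x x = 0 \<longleftrightarrow> x = 0"
    using suminf_eq_zero_iff[OF square_summable]
    by (simp add: inner_l2_def Rep_l2_inject[symmetric] fun_eq_iff)
  show "norm x = sqrt (inner x x)" by (simp add: norm_l2_def)
qed

end

lemma power2_norm_l2: "(norm x)^2 = (\<Sum>i. (Rep_l2 x i)^2)"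
  unfolding power2_norm_eq_inner by (simp add: inner_l2_def power2_eq_square)

lemma partial_sum_le_power2_norm_l2: "(\<Sum>i<n. (Rep_l2 x i)^2) \<le> (norm x)^2"
  unfolding power2_norm_l2 by (rule sum_le_suminf) auto

lemma abs_Rep_l2_le_norm: "\<bar>Rep_l2 x i\<bar> \<le> norm x"
proof -
  have "(Rep_l2 x i)^2 \<le> (\<Sum>k<Suc i. (Rep_l2 x k)^2)"
    by (rule member_le_sum) auto
  also have "\<dots> \<le> (norm x)^2"
    by (rule partial_sum_le_power2_norm_l2)
  finally show ?thesis
    using abs_le_square_iff[of "Rep_l2 x i" "norm x"] by simp
qed

lemma Cauchy_Rep_l2:
  assumes "Cauchy X"
  shows "Cauchy (\<lambda>n. Rep_l2 (X n) i)"
proof (rule metric_CauchyI)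
  fix e :: real assume "e > 0"
  then obtain M where "\<forall>m\<ge>M. \<forall>n\<ge>M. dist (X m) (X n) < e"
    using metric_CauchyD[OF assms] by blast
  moreover have "dist (Rep_l2 (X m) i) (Rep_l2 (X n) i) \<le> dist (X m) (X n)" for m n
    using abs_Rep_l2_le_norm[of "X m - X n" i] by (simp add: dist_norm dist_real_def)
  ultimately show "\<exists>M. \<forall>m\<ge>M. \<forall>n\<ge>M. dist (Rep_l2 (X m) i) (Rep_l2 (X n) i) < e"
    by (meson order_le_less_trans)
qed

lemma square_summable_diff_coordinate_limit:
  assumes close: "\<And>m. m \<ge> N \<Longrightarrow> norm (X n - X m) \<le> e"
    and lim: "\<And>i. (\<lambda>m. Rep_l2 (X m) i) \<longlonglongrightarrow> L i"
  shows "summable (\<lambda>i. (Rep_l2 (X n) i - L i)^2)" and "(\<Sum>i. (Rep_l2 (X n) i - L i)^2) \<le> e^2"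
proof -
  have partial_le: "(\<Sum>i<K. (Rep_l2 (X n) i - L i)^2) \<le> e^2" for K
  proof (rule LIMSEQ_le_const2)
    show "(\<lambda>m. \<Sum>i<K. (Rep_l2 (X n) i - Rep_l2 (X m) i)^2) \<longlonglongrightarrow> (\<Sum>i<K. (Rep_l2 (X n) i - L i)^2)"
      by (intro tendsto_intros lim)
    have "(\<Sum>i<K. (Rep_l2 (X n) i - Rep_l2 (X m) i)^2) \<le> e^2" if "m \<ge> N" for m
    proof -
      have "(\<Sum>i<K. (Rep_l2 (X n) i - Rep_l2 (X m) i)^2) \<le> (norm (X n - X m))^2"
        using partial_sum_le_power2_norm_l2[of "X n - X m" K] by simp
      also have "\<dots> \<le> e^2"
        using close[OF that] by (intro power_mono) auto
      finally show ?thesis .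
    qed
    then show "\<exists>M. \<forall>m\<ge>M. (\<Sum>i<K. (Rep_l2 (X n) i - Rep_l2 (X m) i)^2) \<le> e^2"
      by blast
  qed
  show summable: "summable (\<lambda>i. (Rep_l2 (X n) i - L i)^2)"
    using partial_le by (intro summableI_nonneg_bounded) auto
  show "(\<Sum>i. (Rep_l2 (X n) i - L i)^2) \<le> e^2"
    using summable partial_le by (rule suminf_le_const)
qed

instance l2 :: complete_space
proof
  fix X :: "nat \<Rightarrow> l2"
  assume "Cauchy X"
  then have "convergent (\<lambda>n. Rep_l2 (X n) i)" for i
    using Cauchy_Rep_l2[OF \<open>Cauchy X\<close>] by (simp add: Cauchy_convergent_iff)
  then obtain L where lim: "\<And>i. (\<lambda>n. Rep_l2 (X n) i) \<longlonglongrightarrow> L i"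
    unfolding convergent_def by metis
  have eventually_close: "\<exists>N. \<forall>n\<ge>N. summable (\<lambda>i. (Rep_l2 (X n) i - L i)^2) \<and>
      (\<Sum>i. (Rep_l2 (X n) i - L i)^2) \<le> e^2" if "e > 0" for e
  proof -
    obtain N where "\<forall>m\<ge>N. \<forall>n\<ge>N. dist (X m) (X n) < e"
      using metric_CauchyD[OF \<open>Cauchy X\<close> \<open>e > 0\<close>] by blast
    then have close: "norm (X n - X m) \<le> e" if "n \<ge> N" "m \<ge> N" for n m
      using that by (simp add: dist_norm less_imp_le)
    have "summable (\<lambda>i. (Rep_l2 (X n) i - L i)^2) \<and> (\<Sum>i. (Rep_l2 (X n) i - L i)^2) \<le> e^2"
      if "n \<ge> N" for n
      using square_summable_diff_coordinate_limit[OF close[OF that] lim] by simp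
    then show ?thesis
      by blast
  qed
  then obtain N where "summable (\<lambda>i. (Rep_l2 (X N) i - L i)^2)"
    using eventually_close[of 1] by auto
  then have "summable (\<lambda>i. (Rep_l2 (X N) i + (- 1) * (Rep_l2 (X N) i - L i))^2)"
    by (intro square_summable_add square_summable_scale) simp_all
  then have Rep_Abs_L: "Rep_l2 (Abs_l2 L) = L"
    by (simp add: Abs_l2_inverse)
  have "X \<longlonglongrightarrow> Abs_l2 L"
  proof (rule LIMSEQ_I)
    fix r :: real assume "r > 0"
    then obtain N where N: "\<forall>n\<ge>N. summable (\<lambda>i. (Rep_l2 (X n) i - L i)^2) \<and>
        (\<Sum>i. (Rep_l2 (X n) i - L i)^2) \<le> (r/2)^2"
      using eventually_close[of "r/2"] by auto
    have "norm (X n - Abs_l2 L) < r" if "n \<ge> N" for n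
    proof -
      have "(norm (X n - Abs_l2 L))^2 \<le> (r/2)^2"
        using N that by (simp add: power2_norm_l2 Rep_Abs_L)
      then have "norm (X n - Abs_l2 L) \<le> r/2"
        by (rule power2_le_imp_le) (use \<open>r > 0\<close> in simp)
      then show ?thesis
        using \<open>r > 0\<close> by simp
    qed
    then show "\<exists>N. \<forall>n\<ge>N. norm (X n - Abs_l2 L) < r"
      by blast
  qed
  then show "convergent X"
    unfolding convergent_def by blast
qed

section \<open>The weighted space \<open>M\<^sub>a\<close> as a copy of \<open>\<ell>\<^sup>2\<close>\<close>

lemma Ma_iff_square_summable: "x \<in> Ma a \<longleftrightarrow> summable (\<lambda>i. (a i * x i)^2)"
  by (simp add: Ma_def power_mult_distrib)

lemma Ma_add: "x \<in> Ma a \<Longrightarrow> y \<in> Ma a \<Longrightarrow> (\<lambda>j. x j + y j) \<in> Ma a"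
  using square_summable_add[of "\<lambda>i. a i * x i" "\<lambda>i. a i * y i"]
  by (simp add: Ma_iff_square_summable distrib_left)

lemma Ma_scale: "x \<in> Ma a \<Longrightarrow> (\<lambda>j. c * x j) \<in> Ma a"
  using square_summable_scale[of "\<lambda>i. a i * x i" c]
  by (simp add: Ma_iff_square_summable mult.left_commute)

lemma Ma_diff: "x \<in> Ma a \<Longrightarrow> y \<in> Ma a \<Longrightarrow> (\<lambda>j. x j - y j) \<in> Ma a"
  using Ma_add[of x a "\<lambda>j. (- 1) * y j"] Ma_scale[of y a "- 1"] by simp

lemma Ma_sum:
  fixes n :: nat
  assumes "\<And>i. u i \<in> Ma a"
  shows "(\<lambda>j. \<Sum>i<n. u i j) \<in> Ma a"
proof (induction n)
  case 0
  show ?case by (simp add: Ma_def)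
next
  case (Suc n)
  then show ?case by (simp add: Ma_add assms)
qed

definition weighted_l2 :: "(nat \<Rightarrow> real) \<Rightarrow> (nat \<Rightarrow> real) \<Rightarrow> l2" where
  "weighted_l2 a x = Abs_l2 (\<lambda>i. a i * x i)"

lemma Rep_weighted_l2: "x \<in> Ma a \<Longrightarrow> Rep_l2 (weighted_l2 a x) = (\<lambda>i. a i * x i)"
  by (simp add: weighted_l2_def Abs_l2_inverse Ma_iff_square_summable)

lemma weighted_l2_diff:
  "x \<in> Ma a \<Longrightarrow> y \<in> Ma a \<Longrightarrow> weighted_l2 a (\<lambda>j. x j - y j) = weighted_l2 a x - weighted_l2 a y"
  by (rule l2_eqI) (simp add: Rep_weighted_l2 Ma_diff right_diff_distrib)

lemma weighted_l2_scale: "x \<in> Ma a \<Longrightarrow> weighted_l2 a (\<lambda>j. c * x j) = c *\<^sub>R weighted_l2 a x"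
  by (rule l2_eqI) (simp add: Rep_weighted_l2 Ma_scale mult.left_commute)

lemma weighted_l2_sum:
  fixes n :: nat
  assumes "\<And>i. u i \<in> Ma a"
  shows "weighted_l2 a (\<lambda>j. \<Sum>i<n. u i j) = (\<Sum>i<n. weighted_l2 a (u i))"
proof (induction n)
  case 0
  show ?case by (rule l2_eqI) (simp add: Rep_weighted_l2 Ma_def)
next
  case (Suc n)
  have "weighted_l2 a (\<lambda>j. \<Sum>i<Suc n. u i j)
      = weighted_l2 a (\<lambda>j. \<Sum>i<n. u i j) + weighted_l2 a (u n)"
    by (rule l2_eqI) (simp add: Rep_weighted_l2 Ma_sum Ma_add assms distrib_left)
  then show ?case
    using Suc by simp
qed

lemma norm_a_eq_norm_weighted_l2: "x \<in> Ma a \<Longrightarrow> norm_a a x = norm (weighted_l2 a x)"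
  by (simp add: norm_a_def norm_eq_sqrt_inner inner_l2_def Rep_weighted_l2 power_mult_distrib
      power2_eq_square mult_ac)

lemma weighted_l2_inject:
  assumes "\<And>i. a i > 0" "x \<in> Ma a" "y \<in> Ma a" "weighted_l2 a x = weighted_l2 a y"
  shows "x = y"
proof
  fix i
  have "Rep_l2 (weighted_l2 a x) i = Rep_l2 (weighted_l2 a y) i"
    using assms(4) by simp
  then show "x i = y i"
    using assms(1)[of i] by (simp add: Rep_weighted_l2 assms(2,3))
qed

lemma weighted_l2_surj:
  assumes "\<And>i. a i > 0"
  shows "\<exists>x\<in>Ma a. weighted_l2 a x = v"
proof
  define x where "x i = Rep_l2 v i / a i" for i
  have ax: "a i * x i = Rep_l2 v i" for i
    using assms[of i] by (simp add: x_def)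
  then show "x \<in> Ma a"
    by (simp add: Ma_iff_square_summable)
  show "weighted_l2 a x = v"
    by (simp add: weighted_l2_def ax Rep_l2_inverse)
qed

lemma ga_sums_iff_sums_weighted_l2:
  assumes "\<And>i. u i \<in> Ma a"
  shows "ga_sums a u s \<longleftrightarrow> s \<in> Ma a \<and> (\<lambda>i. weighted_l2 a (u i)) sums weighted_l2 a s"
proof (cases "s \<in> Ma a")
  case True
  have "norm_a a (\<lambda>j. (\<Sum>i<n. u i j) - s j) = norm ((\<Sum>i<n. weighted_l2 a (u i)) - weighted_l2 a s)"
    for n
    by (simp add: norm_a_eq_norm_weighted_l2 Ma_diff Ma_sum assms True weighted_l2_diff weighted_l2_sum)
  then show ?thesis
    using True by (simp add: ga_sums_def sums_def tendsto_norm_zero_iff LIM_zero_iff)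
qed (simp add: ga_sums_def)

lemma ga_sums_centered_iff_sums:
  assumes "\<And>i. x i \<in> Ma a" "p \<in> Ma a"
  shows "ga_sums a (\<lambda>i j. c i * (x i j - p j)) s \<longleftrightarrow>
    s \<in> Ma a \<and> (\<lambda>i. c i *\<^sub>R (weighted_l2 a (x i) - weighted_l2 a p)) sums weighted_l2 a s"
  using assms by (simp add: ga_sums_iff_sums_weighted_l2 Ma_scale Ma_diff weighted_l2_scale weighted_l2_diff)

section \<open>Maps preserving inner products of centred points\<close>

lemma inner_centered_eq_if_dist_eq:
  fixes \<phi> :: "'a \<Rightarrow> 'b::real_inner" and \<psi> :: "'a \<Rightarrow> 'c::real_inner"
  assumes dist_eq: "\<And>x y. x \<in> E \<Longrightarrow> y \<in> E \<Longrightarrow> dist (\<psi> x) (\<psi> y) = dist (\<phi> x) (\<phi> y)"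
    and "p \<in> E" "x \<in> E" "y \<in> E"
  shows "inner (\<psi> x - \<psi> p) (\<psi> y - \<psi> p) = inner (\<phi> x - \<phi> p) (\<phi> y - \<phi> p)"
proof -
  have "norm (\<psi> z - \<psi> z') = norm (\<phi> z - \<phi> z')" if "z \<in> E" "z' \<in> E" for z z'
    using dist_eq[OF that] by (simp add: dist_norm)
  moreover have "(u - w) - (v - w) = u - v" for u v w :: "'d::real_vector"
    by simp
  ultimately show ?thesis
    using assms by (simp add: dot_norm_neg[of "\<psi> x - \<psi> p"] dot_norm_neg[of "\<phi> x - \<phi> p"])
qed

lemma norm_diff_combinations_eq:
  fixes P :: "'a \<Rightarrow> 'b::real_inner" and Q :: "'a \<Rightarrow> 'c::real_inner"
  assumes "\<And>z z'. z \<in> E \<Longrightarrow> z' \<in> E \<Longrightarrow> inner (Q z) (Q z') = inner (P z) (P z')"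
    and "\<And>i. x i \<in> E" "\<And>k. y k \<in> E"
  shows "norm ((\<Sum>i\<in>A. c i *\<^sub>R Q (x i)) - (\<Sum>k\<in>B. d k *\<^sub>R Q (y k)))
       = norm ((\<Sum>i\<in>A. c i *\<^sub>R P (x i)) - (\<Sum>k\<in>B. d k *\<^sub>R P (y k)))"
  unfolding norm_eq_sqrt_inner
  by (simp add: inner_diff_left inner_diff_right inner_sum_left inner_sum_right assms)

lemma summable_transfer_by_inner:
  fixes P :: "'a \<Rightarrow> 'b::real_inner" and Q :: "'a \<Rightarrow> 'c::{real_inner, complete_space}"
  assumes inner: "\<And>z z'. z \<in> E \<Longrightarrow> z' \<in> E \<Longrightarrow> inner (Q z) (Q z') = inner (P z) (P z')"
    and x: "\<And>i. x i \<in> E"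
    and "summable (\<lambda>i. c i *\<^sub>R P (x i))"
  shows "summable (\<lambda>i. c i *\<^sub>R Q (x i))"
proof -
  obtain s where "(\<lambda>i. c i *\<^sub>R P (x i)) sums s"
    using assms(3) by (auto simp: summable_def)
  then have "Cauchy (\<lambda>n. \<Sum>i<n. c i *\<^sub>R P (x i))"
    unfolding sums_def by (rule LIMSEQ_imp_Cauchy)
  moreover have "dist (\<Sum>i<m. c i *\<^sub>R Q (x i)) (\<Sum>i<n. c i *\<^sub>R Q (x i))
      = dist (\<Sum>i<m. c i *\<^sub>R P (x i)) (\<Sum>i<n. c i *\<^sub>R P (x i))" for m n
    unfolding dist_norm by (rule norm_diff_combinations_eq[OF inner x x])
  ultimately have "Cauchy (\<lambda>n. \<Sum>i<n. c i *\<^sub>R Q (x i))"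
    by (simp add: Cauchy_def)
  then show ?thesis
    by (simp add: Cauchy_convergent_iff convergent_def summable_def sums_def)
qed

lemma sums_unique_transfer_by_inner:
  fixes P :: "'a \<Rightarrow> 'b::real_inner" and Q :: "'a \<Rightarrow> 'c::real_inner"
  assumes inner: "\<And>z z'. z \<in> E \<Longrightarrow> z' \<in> E \<Longrightarrow> inner (Q z) (Q z') = inner (P z) (P z')"
    and x: "\<And>i. x i \<in> E" and y: "\<And>k. y k \<in> E"
    and "(\<lambda>i. c i *\<^sub>R P (x i)) sums s" "(\<lambda>k. d k *\<^sub>R P (y k)) sums s"
    and "(\<lambda>i. c i *\<^sub>R Q (x i)) sums t" "(\<lambda>k. d k *\<^sub>R Q (y k)) sums u"
  shows "t = u"
proof -
  let ?SQ = "\<lambda>n. (\<Sum>i<n. c i *\<^sub>R Q (x i)) - (\<Sum>k<n. d k *\<^sub>R Q (y k))"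
  let ?SP = "\<lambda>n. (\<Sum>i<n. c i *\<^sub>R P (x i)) - (\<Sum>k<n. d k *\<^sub>R P (y k))"
  have "(\<lambda>n. norm (?SP n)) \<longlonglongrightarrow> norm (s - s)"
    using assms(4,5) unfolding sums_def by (intro tendsto_intros)
  moreover have "norm (?SQ n) = norm (?SP n)" for n
    by (rule norm_diff_combinations_eq[OF inner x y])
  ultimately have "(\<lambda>n. norm (?SQ n)) \<longlonglongrightarrow> 0"
    by simp
  then have "?SQ \<longlonglongrightarrow> 0"
    by (rule tendsto_norm_zero_cancel)
  moreover have "?SQ \<longlonglongrightarrow> t - u"
    using assms(6,7) unfolding sums_def by (intro tendsto_intros)
  ultimately show "t = u"
    using LIMSEQ_unique by fastforce
qed

section \<open>Isometries between subsets of \<open>M\<^sub>a\<close>\<close>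

locale Ma_isometry =
  fixes a :: "nat \<Rightarrow> real" and E :: "(nat \<Rightarrow> real) set"
    and f :: "(nat \<Rightarrow> real) \<Rightarrow> (nat \<Rightarrow> real)" and p :: "nat \<Rightarrow> real"
  assumes a_pos: "\<And>i. a i > 0"
    and E_subset_Ma: "E \<subseteq> Ma a" and image_subset_Ma: "f ` E \<subseteq> Ma a"
    and isometric: "\<And>x y. x \<in> E \<Longrightarrow> y \<in> E \<Longrightarrow> dist_a a (f x) (f y) = dist_a a x y"
    and p_in_E: "p \<in> E"
begin

abbreviation J :: "(nat \<Rightarrow> real) \<Rightarrow> l2" where
  "J \<equiv> weighted_l2 a"

lemma inner_centered_image_eq:
  assumes "x \<in> E" "y \<in> E"
  shows "inner (J (f x) - J (f p)) (J (f y) - J (f p)) = inner (J x - J p) (J y - J p)"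
proof (rule inner_centered_eq_if_dist_eq[where \<phi>=J and \<psi>="\<lambda>z. J (f z)", OF _ p_in_E assms])
  fix x y assume "x \<in> E" "y \<in> E"
  then show "dist (J (f x)) (J (f y)) = dist (J x) (J y)"
    using isometric E_subset_Ma image_subset_Ma
    by (simp add: subset_eq dist_norm dist_a_def norm_a_eq_norm_weighted_l2 Ma_diff weighted_l2_diff)
qed

lemma ga_sums_domain_iff:
  assumes "\<forall>i. x i \<in> E"
  shows "ga_sums a (\<lambda>i j. \<alpha> i * (x i j - p j)) s \<longleftrightarrow>
    s \<in> Ma a \<and> (\<lambda>i. \<alpha> i *\<^sub>R (J (x i) - J p)) sums J s"
  using assms E_subset_Ma p_in_E by (intro ga_sums_centered_iff_sums) auto

lemma ga_sums_image_iff: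
  assumes "\<forall>i. x i \<in> E"
  shows "ga_sums a (\<lambda>i j. \<alpha> i * (f (x i) j - f p j)) t \<longleftrightarrow>
    t \<in> Ma a \<and> (\<lambda>i. \<alpha> i *\<^sub>R (J (f (x i)) - J (f p))) sums J t"
  using assms image_subset_Ma p_in_E by (intro ga_sums_centered_iff_sums) auto

lemma image_series_summable:
  assumes x: "\<forall>i. x i \<in> E" and "ga_sums a (\<lambda>i j. \<alpha> i * (x i j - p j)) s"
  shows "\<exists>t. ga_sums a (\<lambda>i j. \<alpha> i * (f (x i) j - f p j)) t"
proof -
  from x have x_in_E: "\<And>i. x i \<in> E" by blast
  have "summable (\<lambda>i. \<alpha> i *\<^sub>R (J (x i) - J p))"
    using assms ga_sums_domain_iff by (auto simp: summable_def)
  then have "summable (\<lambda>i. \<alpha> i *\<^sub>R (J (f (x i)) - J (f p)))"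
    using summable_transfer_by_inner[where P="\<lambda>z. J z - J p" and Q="\<lambda>z. J (f z) - J (f p)",
        OF inner_centered_image_eq x_in_E] by simp
  then obtain v where v: "(\<lambda>i. \<alpha> i *\<^sub>R (J (f (x i)) - J (f p))) sums v"
    by (auto simp: summable_def)
  obtain t where "t \<in> Ma a" "J t = v"
    using a_pos weighted_l2_surj by blast
  then show ?thesis
    using v x ga_sums_image_iff by blast
qed

lemma image_series_sums_unique:
  assumes x: "\<forall>i. x i \<in> E" and y: "\<forall>i. y i \<in> E"
    and "ga_sums a (\<lambda>i j. \<alpha> i * (x i j - p j)) s" "ga_sums a (\<lambda>i j. \<beta> i * (y i j - p j)) s"
    and t: "ga_sums a (\<lambda>i j. \<alpha> i * (f (x i) j - f p j)) t"
    and u: "ga_sums a (\<lambda>i j. \<beta> i * (f (y i) j - f p j)) u"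
  shows "t = u"
proof (rule weighted_l2_inject[OF a_pos])
  from x y have x_in_E: "\<And>i. x i \<in> E" and y_in_E: "\<And>i. y i \<in> E" by blast+
  show "t \<in> Ma a" "u \<in> Ma a"
    using t u x y ga_sums_image_iff by blast+
  have "(\<lambda>i. \<alpha> i *\<^sub>R (J (x i) - J p)) sums J s" "(\<lambda>i. \<beta> i *\<^sub>R (J (y i) - J p)) sums J s"
    using assms ga_sums_domain_iff by blast+
  moreover have "(\<lambda>i. \<alpha> i *\<^sub>R (J (f (x i)) - J (f p))) sums J t"
    "(\<lambda>i. \<beta> i *\<^sub>R (J (f (y i)) - J (f p))) sums J u"
    using assms ga_sums_image_iff by blast+
  ultimately show "J t = J u"
    using sums_unique_transfer_by_inner[where P="\<lambda>z. J z - J p" and Q="\<lambda>z. J (f z) - J (f p)",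
        OF inner_centered_image_eq x_in_E y_in_E] by simp
qed

definition image_series_sum :: "(nat \<Rightarrow> real) \<Rightarrow> (nat \<Rightarrow> real)" where
  "image_series_sum s = (SOME t. \<exists>x \<alpha>. (\<forall>i. x i \<in> E) \<and>
     ga_sums a (\<lambda>i j. \<alpha> i * (x i j - p j)) s \<and> ga_sums a (\<lambda>i j. \<alpha> i * (f (x i) j - f p j)) t)"

lemma ga_sums_image_series_sum:
  assumes x: "\<forall>i. x i \<in> E" and s: "ga_sums a (\<lambda>i j. \<alpha> i * (x i j - p j)) s"
  shows "ga_sums a (\<lambda>i j. \<alpha> i * (f (x i) j - f p j)) (image_series_sum s)"
proof -
  obtain t where t: "ga_sums a (\<lambda>i j. \<alpha> i * (f (x i) j - f p j)) t"
    using image_series_summable[OF x s] by blast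
  let ?represents = "\<lambda>t. \<exists>x' \<alpha>'. (\<forall>i. x' i \<in> E) \<and>
    ga_sums a (\<lambda>i j. \<alpha>' i * (x' i j - p j)) s \<and> ga_sums a (\<lambda>i j. \<alpha>' i * (f (x' i) j - f p j)) t"
  have "?represents t"
    using x s t by blast
  then have "?represents (image_series_sum s)"
    unfolding image_series_sum_def by (rule someI[of ?represents])
  then obtain x' \<alpha>' where x': "\<forall>i. x' i \<in> E" and s': "ga_sums a (\<lambda>i j. \<alpha>' i * (x' i j - p j)) s"
    and t': "ga_sums a (\<lambda>i j. \<alpha>' i * (f (x' i) j - f p j)) (image_series_sum s)"
    by blast
  have "t = image_series_sum s"
    by (rule image_series_sums_unique[OF x x' s s' t t'])
  with t show ?thesis
    by simp
qed

definition extension :: "(nat \<Rightarrow> real) \<Rightarrow> (nat \<Rightarrow> real)" where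
  "extension z = (\<lambda>j. f p j + image_series_sum (\<lambda>k. z k - p k) j)"

lemma ga_sums_extension:
  assumes "\<forall>i. x i \<in> E" "ga_sums a (\<lambda>i j. \<alpha> i * (x i j - p j)) s"
  shows "ga_sums a (\<lambda>i j. \<alpha> i * (f (x i) j - f p j)) (\<lambda>j. extension (\<lambda>k. p k + s k) j - f p j)"
  using ga_sums_image_series_sum[OF assms] by (simp add: extension_def)

lemma extension_in_Ma:
  assumes "z \<in> GS a E p"
  shows "extension z \<in> Ma a"
proof -
  obtain x \<alpha> s where x: "\<forall>i. x i \<in> E" and s: "ga_sums a (\<lambda>i j. \<alpha> i * (x i j - p j)) s"
    and z: "z = (\<lambda>j. p j + s j)"
    using assms unfolding GS_def by blast
  have "image_series_sum (\<lambda>k. z k - p k) \<in> Ma a"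
    using ga_sums_image_series_sum[OF x s] by (simp add: z ga_sums_def)
  moreover have "f p \<in> Ma a"
    using p_in_E image_subset_Ma by blast
  ultimately show ?thesis
    unfolding extension_def by (rule Ma_add[rotated])
qed

end

theorem lemma3p8:
  fixes a :: "nat \<Rightarrow> real" and E1 E2 :: "(nat \<Rightarrow> real) set"
    and f :: "(nat \<Rightarrow> real) \<Rightarrow> (nat \<Rightarrow> real)" and p :: "nat \<Rightarrow> real"
  assumes a_pos: "\<And>i. a i > 0"
    and a_sq: "summable (\<lambda>i. (a i)^2)"
    and E1: "E1 \<noteq> {}" "E1 \<subseteq> Ma a" "bounded_a a E1"
    and E2: "E2 \<noteq> {}" "E2 \<subseteq> Ma a" "bounded_a a E2"
    and onto: "f ` E1 = E2"
    and iso: "\<And>x y. x \<in> E1 \<Longrightarrow> y \<in> E1 \<Longrightarrow> dist_a a (f x) (f y) = dist_a a x y"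
    and p: "p \<in> E1"
  shows
    "(\<forall>x \<alpha>. (\<forall>i. x i \<in> E1) \<and> ga_summable a (\<lambda>i j. \<alpha> i * (x i j - p j)) \<longrightarrow>
         ga_summable a (\<lambda>i j. \<alpha> i * (f (x i) j - f p j)))
   \<and> (\<forall>x \<alpha> y \<beta> s t u. (\<forall>i. x i \<in> E1) \<and> (\<forall>i. y i \<in> E1) \<and>
         ga_sums a (\<lambda>i j. \<alpha> i * (x i j - p j)) s \<and>
         ga_sums a (\<lambda>i j. \<beta> i * (y i j - p j)) s \<and>
         ga_sums a (\<lambda>i j. \<alpha> i * (f (x i) j - f p j)) t \<and>
         ga_sums a (\<lambda>i j. \<beta> i * (f (y i) j - f p j)) u \<longrightarrow> t = u)
   \<and> (\<exists>F. (\<forall>z\<in>GS a E1 p. F z \<in> Ma a) \<and>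
         (\<forall>x \<alpha> s. (\<forall>i. x i \<in> E1) \<and> ga_sums a (\<lambda>i j. \<alpha> i * (x i j - p j)) s \<longrightarrow>
            ga_sums a (\<lambda>i j. \<alpha> i * (f (x i) j - f p j)) (\<lambda>j. F (\<lambda>k. p k + s k) j - f p j)))"
proof -
  interpret Ma_isometry a E1 f p
    using a_pos E1(2) E2(2) onto iso p by unfold_locales auto
  show ?thesis
  proof (intro conjI allI impI)
    fix x \<alpha>
    assume "(\<forall>i. x i \<in> E1) \<and> ga_summable a (\<lambda>i j. \<alpha> i * (x i j - p j))"
    then show "ga_summable a (\<lambda>i j. \<alpha> i * (f (x i) j - f p j))"
      unfolding ga_summable_def using image_series_summable by blast
  next
    fix x \<alpha> y \<beta> s t u
    assume "(\<forall>i. x i \<in> E1) \<and> (\<forall>i. y i \<in> E1) \<and>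
      ga_sums a (\<lambda>i j. \<alpha> i * (x i j - p j)) s \<and> ga_sums a (\<lambda>i j. \<beta> i * (y i j - p j)) s \<and>
      ga_sums a (\<lambda>i j. \<alpha> i * (f (x i) j - f p j)) t \<and> ga_sums a (\<lambda>i j. \<beta> i * (f (y i) j - f p j)) u"
    then show "t = u"
      using image_series_sums_unique by blast
  next
    show "\<exists>F. (\<forall>z\<in>GS a E1 p. F z \<in> Ma a) \<and>
        (\<forall>x \<alpha> s. (\<forall>i. x i \<in> E1) \<and> ga_sums a (\<lambda>i j. \<alpha> i * (x i j - p j)) s \<longrightarrow>
           ga_sums a (\<lambda>i j. \<alpha> i * (f (x i) j - f p j)) (\<lambda>j. F (\<lambda>k. p k + s k) j - f p j))"
      using extension_in_Ma ga_sums_extension by (intro exI[of _ extension]) auto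
  qed
qed

end
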